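(* Let $F\subsetneq K$ be fields of characteristic $0$, with $F$ a proper nonempty subfield of $K$. Let $q(x)=\sum_{j=0}^{m}b_j x^j\in F[x]$ be non-constant with $b_m\neq 0$, and let $p(x)=\sum_{k=0}^{n}a_k x^k\in K[x]$ with $a_n\neq 0$. If $p\circ q\in F[x]$, then $p\in F[x]$.
   Context: $F[x]$ denotes the set of polynomials with all coefficients in $F$. *)

theory Defs
  imports "HOL-Computational_Algebra.Polynomial"
begin

definition is_subfield :: "'a::field set \<Rightarrow> bool" where
  "is_subfield F \<longleftrightarrow> 0 \<in> F \<and> 1 \<in> F \<and>
     (\<forall>x\<in>F. \<forall>y\<in>F. x + y \<in> F \<and> x * y \<in> F) \<and>
     (\<forall>x\<in>F. - x \<in> F) \<and>
     (\<forall>x\<in>F. x \<noteq> 0 \<longrightarrow> inverse x \<in> F)"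

definition poly_over :: "'a::zero set \<Rightarrow> 'a poly set" where
  "poly_over F = {p. \<forall>i. coeff p i \<in> F}"

end

theory Submission
  imports Defs
begin

text \<open>Comparing leading coefficients, \<open>lead_coeff (p \<circ>\<^sub>p q) = lead_coeff p * lead_coeff q ^ degree p\<close>,
so \<open>lead_coeff p \<in> F\<close>. Subtracting \<open>lead_coeff p * x ^ degree p\<close> from \<open>p\<close> lowers the degree
and keeps the composite over \<open>F\<close>, so induction on the degree finishes the argument.\<close>

lemma subfield_sum:
  assumes "is_subfield F" "\<And>x. x \<in> A \<Longrightarrow> f x \<in> F"
  shows "sum f A \<in> F"
  using assms(2)
  by (induction A rule: infinite_finite_induct) (use assms(1) in \<open>simp_all add: is_subfield_def\<close>)

lemma subfield_diff:
  "is_subfield F \<Longrightarrow> x \<in> F \<Longrightarrow> y \<in> F \<Longrightarrow> x - y \<in> F"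
  unfolding is_subfield_def by (metis diff_conv_add_uminus)

lemma subfield_power:
  "is_subfield F \<Longrightarrow> x \<in> F \<Longrightarrow> x ^ n \<in> F"
  by (induction n) (simp_all add: is_subfield_def)

lemma subfield_mult_cancel_right:
  fixes a b :: "'a::field"
  assumes "is_subfield F" "a * b \<in> F" "b \<in> F" "b \<noteq> 0"
  shows "a \<in> F"
proof -
  have "a = (a * b) * inverse b" using assms(4) by simp
  with assms show ?thesis by (metis is_subfield_def)
qed

lemma poly_over_add:
  "is_subfield F \<Longrightarrow> p \<in> poly_over F \<Longrightarrow> q \<in> poly_over F \<Longrightarrow> p + q \<in> poly_over F"
  by (simp add: poly_over_def is_subfield_def)

lemma poly_over_diff:
  "is_subfield F \<Longrightarrow> p \<in> poly_over F \<Longrightarrow> q \<in> poly_over F \<Longrightarrow> p - q \<in> poly_over F"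
  by (simp add: poly_over_def subfield_diff)

lemma poly_over_mult:
  assumes "is_subfield F" "p \<in> poly_over F" "q \<in> poly_over F"
  shows "p * q \<in> poly_over F"
proof -
  have "(\<Sum>i\<le>n. coeff p i * coeff q (n - i)) \<in> F" for n
    using assms by (intro subfield_sum) (auto simp: poly_over_def is_subfield_def)
  then show ?thesis by (simp add: poly_over_def coeff_mult)
qed

lemma poly_over_1: "is_subfield F \<Longrightarrow> 1 \<in> poly_over F"
  by (simp add: poly_over_def is_subfield_def coeff_1)

lemma poly_over_power:
  "is_subfield F \<Longrightarrow> q \<in> poly_over F \<Longrightarrow> q ^ n \<in> poly_over F"
  by (induction n) (simp_all add: poly_over_1 poly_over_mult)

lemma poly_over_smult:
  "is_subfield F \<Longrightarrow> c \<in> F \<Longrightarrow> q \<in> poly_over F \<Longrightarrow> smult c q \<in> poly_over F"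
  by (simp add: poly_over_def is_subfield_def)

lemma poly_over_monom:
  "is_subfield F \<Longrightarrow> c \<in> F \<Longrightarrow> monom c n \<in> poly_over F"
  by (simp add: poly_over_def is_subfield_def coeff_monom)

lemma pcompose_monom: "pcompose (monom c n) q = smult c (q ^ n)"
proof -
  have "pcompose ([:0, 1:] ^ n) q = q ^ n"
    by (induction n) (simp_all add: pcompose_mult pcompose_pCons pcompose_1)
  then show ?thesis by (simp add: monom_altdef pcompose_smult)
qed

lemma degree_diff_monom_lead_coeff_less:
  fixes p :: "'a::comm_ring poly"
  assumes "degree p > 0"
  shows "degree (p - monom (lead_coeff p) (degree p)) < degree p"
proof (rule degree_lessI)
  show "p - monom (lead_coeff p) (degree p) \<noteq> 0 \<or> 0 < degree p"
    using assms by simp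
  show "\<forall>k\<ge>degree p. coeff (p - monom (lead_coeff p) (degree p)) k = 0"
    by (auto simp: coeff_monom coeff_eq_0 le_less)
qed

lemma lead_coeff_mem_if_pcompose_poly_over:
  fixes p q :: "'a::field poly"
  assumes F: "is_subfield F" and q: "q \<in> poly_over F" "degree q > 0"
    and pq: "pcompose p q \<in> poly_over F"
  shows "lead_coeff p \<in> F"
proof (rule subfield_mult_cancel_right[OF F])
  have "lead_coeff q \<in> F" using q(1) by (simp add: poly_over_def)
  then show "lead_coeff q ^ degree p \<in> F" by (rule subfield_power[OF F])
  show "lead_coeff q ^ degree p \<noteq> 0" using q(2) by auto
  show "lead_coeff p * lead_coeff q ^ degree p \<in> F"
    using pq unfolding lead_coeff_comp[OF q(2), symmetric] poly_over_def by blast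
qed

lemma poly_over_if_pcompose_poly_over:
  fixes p q :: "'a::field poly"
  assumes F: "is_subfield F" and q: "q \<in> poly_over F" "degree q > 0"
  shows "pcompose p q \<in> poly_over F \<Longrightarrow> p \<in> poly_over F"
proof (induction "degree p" arbitrary: p rule: less_induct)
  case less
  show ?case
  proof (cases "degree p = 0")
    case True
    then obtain a where "p = [:a:]" by (rule degree_eq_zeroE)
    with less.prems show ?thesis by simp
  next
    case False
    define c where "c = lead_coeff p"
    define p' where "p' = p - monom c (degree p)"
    have c: "c \<in> F"
      unfolding c_def using lead_coeff_mem_if_pcompose_poly_over[OF F q less.prems] .
    have "pcompose p' q = pcompose p q - smult c (q ^ degree p)"
      by (simp add: p'_def pcompose_diff pcompose_monom)
    also have "\<dots> \<in> poly_over F"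
      by (intro poly_over_diff poly_over_smult poly_over_power less.prems F c q(1))
    finally have "p' \<in> poly_over F"
      using less.hyps degree_diff_monom_lead_coeff_less[of p] False
      by (simp add: p'_def c_def)
    then have "p' + monom c (degree p) \<in> poly_over F"
      by (intro poly_over_add poly_over_monom F c)
    then show ?thesis by (simp add: p'_def)
  qed
qed

theorem lemma12:
  fixes F :: "'a::field_char_0 set" and p q :: "'a poly"
  assumes "is_subfield F" and "F \<noteq> UNIV"
    and "q \<in> poly_over F" and "degree q \<ge> 1"
    and "p \<noteq> 0"
    and "pcompose p q \<in> poly_over F"
  shows "p \<in> poly_over F"
  using poly_over_if_pcompose_poly_over[OF assms(1,3)] assms(4,6) by simp

end
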